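(* Let $\varepsilon \neq 0$ and $\gamma \neq 0$ be real constants and consider the equation $$u_{tt}-\varepsilon\,\partial_t(u_{xx}+u_{yy})-\gamma\,(u_{xx}+u_{yy})=f,$$ regarded as a differential equation with independent variables $x,y,t$ and dependent variables $u,f$. A vector field $$V=\xi^1\partial_x+\xi^2\partial_y+\xi^3\partial_t+\phi_1\partial_u+\phi_2\partial_f,$$ with coefficients smooth functions of $(x,y,t,u,f)$, generates a one-parameter group of point symmetries of this equation if and only if $$\xi^1=c_1y+c_2,\quad \xi^2=-c_1x+c_3,\quad \xi^3=c_4,\quad \phi_1=c_5u+F(x,y,t),$$ $$\phi_2=c_5 f+F_{tt}-\varepsilon\,\partial_t(F_{xx}+F_{yy})-\gamma\,(F_{xx}+F_{yy}),$$ for some real constants $c_1,\dots,c_5$ and some smooth function $F(x,y,t)$.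
   Context: A vector field $V$ on the space of variables $(x,y,t,u,f)$ is an infinitesimal point symmetry of the equation if its third prolongation annihilates $u_{tt}-\varepsilon\partial_t(u_{xx}+u_{yy})-\gamma(u_{xx}+u_{yy})-f$ on the solution set of the equation (Lie's infinitesimal invariance criterion). *)

theory Defs
  imports "HOL-Analysis.Analysis"
begin

fun Ck :: "nat \<Rightarrow> ('a::real_normed_vector \<Rightarrow> 'b::real_normed_vector) \<Rightarrow> bool" where
  "Ck 0 g = continuous_on UNIV g"
| "Ck (Suc n) g = ((\<forall>p. g differentiable (at p)) \<and>
                    (\<forall>v. Ck n (\<lambda>p. frechet_derivative g (at p) v)))"

definition smooth :: "('a::real_normed_vector \<Rightarrow> 'b::real_normed_vector) \<Rightarrow> bool" where
  "smooth g = (\<forall>n. Ck n g)"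

type_synonym R3 = "real \<times> real \<times> real"          \<comment> \<open>(x,y,t): indices 0,1,2\<close>
type_synonym R5 = "real \<times> real \<times> real \<times> real \<times> real"  \<comment> \<open>(x,y,t,u,f)\<close>

text \<open>Jet coordinates: w alpha J is the derivative of dependent variable alpha
 (0 = u, 1 = f) with respect to the multi-index J (J i = number of derivatives
 in independent variable i, i = 0,1,2 for x,y,t).\<close>
type_synonym jet = "nat \<Rightarrow> (nat \<Rightarrow> nat) \<Rightarrow> real"
type_synonym jfun = "R3 \<Rightarrow> jet \<Rightarrow> real"

definition ev :: "nat \<Rightarrow> R3" where
  "ev i = (if i = 0 then (1,0,0) else if i = 1 then (0,1,0) else (0,0,1))"

definition mi :: "nat \<Rightarrow> nat \<Rightarrow> nat \<Rightarrow> (nat \<Rightarrow> nat)" where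
  "mi a b c = (\<lambda>i. if i = 0 then a else if i = 1 then b else if i = 2 then c else 0)"

definition mi0 :: "nat \<Rightarrow> nat" where "mi0 = mi 0 0 0"

definition addi :: "(nat \<Rightarrow> nat) \<Rightarrow> nat \<Rightarrow> (nat \<Rightarrow> nat)" where
  "addi J i = J(i := Suc (J i))"

definition mi_order :: "(nat \<Rightarrow> nat) \<Rightarrow> nat" where
  "mi_order J = J 0 + J 1 + J 2"

text \<open>D_i G = dG/dx_i + sum over (alpha,J) of w alpha (J+e_i) * dG/dw alpha J,
 written as the derivative of G along the total-derivative direction.\<close>
definition totD :: "nat \<Rightarrow> jfun \<Rightarrow> jfun" where
  "totD i G z w = deriv (\<lambda>s. G (z + s *\<^sub>R ev i) (\<lambda>\<alpha> J. w \<alpha> J + s * w \<alpha> (addi J i))) 0"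

definition totDJ :: "(nat \<Rightarrow> nat) \<Rightarrow> jfun \<Rightarrow> jfun" where
  "totDJ J G = (totD 0 ^^ J 0) ((totD 1 ^^ J 1) ((totD 2 ^^ J 2) G))"

definition basept :: "R3 \<Rightarrow> jet \<Rightarrow> R5" where
  "basept z w = (fst z, fst (snd z), snd (snd z), w 0 mi0, w 1 mi0)"

text \<open>A vector field xi^1 d_x + xi^2 d_y + xi^3 d_t + phi_1 d_u + phi_2 d_f is given by
 xi i (i = 0,1,2) and phi alpha (alpha = 0,1).\<close>
definition charQ :: "(nat \<Rightarrow> R5 \<Rightarrow> real) \<Rightarrow> (nat \<Rightarrow> R5 \<Rightarrow> real) \<Rightarrow> nat \<Rightarrow> jfun" where
  "charQ xi phi \<alpha> z w =
     phi \<alpha> (basept z w) - (\<Sum>i<3. xi i (basept z w) * w \<alpha> (addi mi0 i))"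

definition prol_coeff :: "(nat \<Rightarrow> R5 \<Rightarrow> real) \<Rightarrow> (nat \<Rightarrow> R5 \<Rightarrow> real) \<Rightarrow> nat \<Rightarrow> (nat \<Rightarrow> nat) \<Rightarrow> jfun" where
  "prol_coeff xi phi \<alpha> J z w =
     totDJ J (charQ xi phi \<alpha>) z w + (\<Sum>i<3. xi i (basept z w) * w \<alpha> (addi J i))"

definition xivec :: "(nat \<Rightarrow> R5 \<Rightarrow> real) \<Rightarrow> R3 \<Rightarrow> jet \<Rightarrow> R3" where
  "xivec xi z w = (xi 0 (basept z w), xi 1 (basept z w), xi 2 (basept z w))"

definition prolong_apply :: "nat \<Rightarrow> (nat \<Rightarrow> R5 \<Rightarrow> real) \<Rightarrow> (nat \<Rightarrow> R5 \<Rightarrow> real) \<Rightarrow> jfun \<Rightarrow> jfun" where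
  "prolong_apply n xi phi G z w =
     deriv (\<lambda>s. G (z + s *\<^sub>R xivec xi z w)
                  (\<lambda>\<alpha> J. w \<alpha> J + s * (if \<alpha> < 2 \<and> mi_order J \<le> n
                                         then prol_coeff xi phi \<alpha> J z w else 0))) 0"

definition is_point_symmetry :: "nat \<Rightarrow> jfun \<Rightarrow> (nat \<Rightarrow> R5 \<Rightarrow> real) \<Rightarrow> (nat \<Rightarrow> R5 \<Rightarrow> real) \<Rightarrow> bool" where
  "is_point_symmetry n \<Delta> xi phi =
     (\<forall>z w. \<Delta> z w = 0 \<longrightarrow> prolong_apply n xi phi \<Delta> z w = 0)"

definition eqn :: "real \<Rightarrow> real \<Rightarrow> jfun" where
  "eqn \<epsilon> \<gamma> z w =
     w 0 (mi 0 0 2) - \<epsilon> * (w 0 (mi 2 0 1) + w 0 (mi 0 2 1))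
       - \<gamma> * (w 0 (mi 2 0 0) + w 0 (mi 0 2 0)) - w 1 mi0"

definition vf :: "'a \<Rightarrow> 'a \<Rightarrow> 'a \<Rightarrow> nat \<Rightarrow> 'a" where
  "vf a b c = (\<lambda>i. if i = 0 then a else if i = 1 then b else c)"

definition pd :: "nat \<Rightarrow> (R3 \<Rightarrow> real) \<Rightarrow> R3 \<Rightarrow> real" where
  "pd i F z = deriv (\<lambda>s. F (z + s *\<^sub>R ev i)) 0"

end

theory Submission
  imports Defs
begin

text \<open>By the prolongation formula, the third prolongation of V applied to the equation is a
  polynomial in the jet coordinates whose coefficients are derivatives of xi^i and phi_alpha at the
  base point (x,y,t,u,f). It has to vanish whenever f = u_tt - eps d_t (u_xx + u_yy) - gam (u_xx + u_yy);
  eliminating f in this way leaves all other jet coordinates free, so every coefficient vanishes.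
  These determining equations are read off at test jets. As eps is nonzero, the coefficients of
  the third order derivatives make xi^1, xi^2 independent of t, u, f and xi^3 independent of
  x, y, u, f, with xi^1_y + xi^2_x = 0 and 2 xi^1_x = 2 xi^2_y = xi^3_t: the xi part is a rotation,
  a translation and a scaling with some rate K. The lower order coefficients make phi_1 affine in u
  with constant slope c5, force gam K = 0, hence K = 0, and determine phi_2. Conversely, for V of
  this form the prolonged equation equals c5 times the equation.\<close>

lemma smooth_Ck: "smooth g \<Longrightarrow> Ck n g"
  by (simp add: smooth_def)

lemma smooth_differentiable: "smooth g \<Longrightarrow> g differentiable (at p)"
  using smooth_Ck[of g 1] by simp

lemma smooth_has_derivative: "smooth g \<Longrightarrow> (g has_derivative frechet_derivative g (at p)) (at p)"
  using smooth_differentiable frechet_derivative_works by blast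

lemma linear_frechet_derivative_smooth: "smooth g \<Longrightarrow> linear (frechet_derivative g (at p))"
  using smooth_differentiable linear_frechet_derivative by blast

lemma smooth_frechet_derivative: "smooth g \<Longrightarrow> smooth (\<lambda>p. frechet_derivative g (at p) v)"
  unfolding smooth_def by (metis Ck.simps(2))

lemma smooth_isCont: "smooth g \<Longrightarrow> isCont g p"
  using smooth_Ck[of g 0] by (simp add: continuous_on_eq_continuous_at)

lemma smooth_has_real_derivative_line:
  fixes g :: "'a::real_normed_vector \<Rightarrow> real"
  assumes g: "smooth g"
  shows "((\<lambda>s. g (q + s *\<^sub>R u)) has_real_derivative frechet_derivative g (at (q + s *\<^sub>R u)) u) (at s)"
proof -
  have "((\<lambda>s. q + s *\<^sub>R u) has_derivative (\<lambda>h. h *\<^sub>R u)) (at s)"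
    by (auto intro!: derivative_eq_intros)
  from has_derivative_compose[OF this smooth_has_derivative[OF g]]
  show ?thesis
    unfolding has_field_derivative_def
    by (rule has_derivative_eq_rhs)
      (simp add: fun_eq_iff linear_cmul[OF linear_frechet_derivative_smooth[OF g]])
qed

lemma second_difference_mean_value:
  fixes g :: "'a::real_normed_vector \<Rightarrow> real"
  assumes g: "smooth g" and h: "h > 0"
  shows "\<exists>\<sigma> \<rho>. 0 < \<sigma> \<and> \<sigma> < h \<and> 0 < \<rho> \<and> \<rho> < h \<and>
     g (p + h *\<^sub>R u + h *\<^sub>R v) - g (p + h *\<^sub>R u) - g (p + h *\<^sub>R v) + g p
       = h * h * frechet_derivative (\<lambda>q. frechet_derivative g (at q) u) (at (p + \<sigma> *\<^sub>R u + \<rho> *\<^sub>R v)) v"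
proof -
  define A where "A = (\<lambda>q. frechet_derivative g (at q) u)"
  define \<phi> where "\<phi> = (\<lambda>s. g ((p + h *\<^sub>R v) + s *\<^sub>R u) - g (p + s *\<^sub>R u))"
  have "DERIV \<phi> s :> A ((p + h *\<^sub>R v) + s *\<^sub>R u) - A (p + s *\<^sub>R u)" for s
    unfolding \<phi>_def A_def by (intro DERIV_diff smooth_has_real_derivative_line[OF g])
  then obtain \<sigma> where \<sigma>: "0 < \<sigma>" "\<sigma> < h"
    and mvt1: "\<phi> h - \<phi> 0 = h * (A ((p + h *\<^sub>R v) + \<sigma> *\<^sub>R u) - A (p + \<sigma> *\<^sub>R u))"
    using MVT2[OF h, of \<phi>] by force
  define \<psi> where "\<psi> = (\<lambda>r. A ((p + \<sigma> *\<^sub>R u) + r *\<^sub>R v))"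
  have "DERIV \<psi> r :> frechet_derivative A (at ((p + \<sigma> *\<^sub>R u) + r *\<^sub>R v)) v" for r
    unfolding \<psi>_def A_def by (intro smooth_has_real_derivative_line smooth_frechet_derivative g)
  then obtain \<rho> where \<rho>: "0 < \<rho>" "\<rho> < h"
    and mvt2: "\<psi> h - \<psi> 0 = h * frechet_derivative A (at ((p + \<sigma> *\<^sub>R u) + \<rho> *\<^sub>R v)) v"
    using MVT2[OF h, of \<psi>] by force
  have "g (p + h *\<^sub>R u + h *\<^sub>R v) - g (p + h *\<^sub>R u) - g (p + h *\<^sub>R v) + g p = \<phi> h - \<phi> 0"
    unfolding \<phi>_def by (simp add: algebra_simps)
  also have "\<dots> = h * (\<psi> h - \<psi> 0)"
    using mvt1 unfolding \<psi>_def by (simp add: algebra_simps)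
  also have "\<dots> = h * h * frechet_derivative A (at (p + \<sigma> *\<^sub>R u + \<rho> *\<^sub>R v)) v"
    using mvt2 by simp
  finally show ?thesis using \<sigma> \<rho> unfolding A_def by blast
qed

lemma isCont_eq_if_values_meet:
  fixes A B :: "'a::metric_space \<Rightarrow> 'b::metric_space"
  assumes "isCont A p" "isCont B p"
    and meet: "\<And>e. e > 0 \<Longrightarrow> \<exists>x y. dist x p < e \<and> dist y p < e \<and> A x = B y"
  shows "A p = B p"
proof (rule ccontr)
  assume "A p \<noteq> B p"
  then have d: "dist (A p) (B p) / 2 > 0" by simp
  obtain e1 where "e1 > 0" and e1: "\<And>x. dist x p < e1 \<Longrightarrow> dist (A x) (A p) < dist (A p) (B p) / 2"
    using assms(1) d unfolding continuous_at_eps_delta by blast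
  obtain e2 where "e2 > 0" and e2: "\<And>y. dist y p < e2 \<Longrightarrow> dist (B y) (B p) < dist (A p) (B p) / 2"
    using assms(2) d unfolding continuous_at_eps_delta by blast
  obtain x y where "dist x p < min e1 e2" "dist y p < min e1 e2" "A x = B y"
    using meet[of "min e1 e2"] \<open>e1 > 0\<close> \<open>e2 > 0\<close> by auto
  then have "dist (A x) (A p) + dist (B y) (B p) < dist (A p) (B p)"
    using e1 e2 by fastforce
  with \<open>A x = B y\<close> show False
    by (metis dist_commute dist_triangle not_le)
qed

theorem frechet_derivative_commute:
  fixes g :: "'a::real_normed_vector \<Rightarrow> real"
  assumes g: "smooth g"
  shows "frechet_derivative (\<lambda>q. frechet_derivative g (at q) u) (at p) v
       = frechet_derivative (\<lambda>q. frechet_derivative g (at q) v) (at p) u"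
proof -
  define A where "A = (\<lambda>x. frechet_derivative (\<lambda>q. frechet_derivative g (at q) u) (at x) v)"
  define B where "B = (\<lambda>x. frechet_derivative (\<lambda>q. frechet_derivative g (at q) v) (at x) u)"
  have "isCont A p" "isCont B p"
    unfolding A_def B_def by (intro smooth_isCont smooth_frechet_derivative g)+
  moreover have "\<exists>x y. dist x p < e \<and> dist y p < e \<and> A x = B y" if "e > 0" for e
  proof -
    define h where "h = e / (norm u + norm v + 1)"
    have n: "norm u + norm v + 1 > 0"
      by (simp add: add_nonneg_pos)
    have h: "h > 0" "h * (norm u + norm v) < e"
      using that n by (simp_all add: h_def field_simps)
    have near: "dist (p + \<sigma> *\<^sub>R u + \<rho> *\<^sub>R v) p < e"
      if "0 < \<sigma>" "\<sigma> < h" "0 < \<rho>" "\<rho> < h" for \<sigma> \<rho>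
    proof -
      have "dist (p + \<sigma> *\<^sub>R u + \<rho> *\<^sub>R v) p \<le> \<sigma> * norm u + \<rho> * norm v"
        using norm_triangle_ineq[of "\<sigma> *\<^sub>R u" "\<rho> *\<^sub>R v"] that by (simp add: dist_norm)
      also have "\<dots> \<le> h * (norm u + norm v)"
        using that by (simp add: distrib_left add_mono mult_right_mono)
      finally show ?thesis using h(2) by linarith
    qed
    obtain \<sigma>1 \<rho>1 where "0 < \<sigma>1" "\<sigma>1 < h" "0 < \<rho>1" "\<rho>1 < h" and uv:
      "g (p + h *\<^sub>R u + h *\<^sub>R v) - g (p + h *\<^sub>R u) - g (p + h *\<^sub>R v) + g p
         = h * h * A (p + \<sigma>1 *\<^sub>R u + \<rho>1 *\<^sub>R v)"
      using second_difference_mean_value[OF g h(1)] unfolding A_def by blast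
    obtain \<sigma>2 \<rho>2 where "0 < \<sigma>2" "\<sigma>2 < h" "0 < \<rho>2" "\<rho>2 < h" and vu:
      "g (p + h *\<^sub>R v + h *\<^sub>R u) - g (p + h *\<^sub>R v) - g (p + h *\<^sub>R u) + g p
         = h * h * B (p + \<rho>2 *\<^sub>R u + \<sigma>2 *\<^sub>R v)"
      using second_difference_mean_value[OF g h(1), of p v u] unfolding B_def by (auto simp: add_ac)
    have "A (p + \<sigma>1 *\<^sub>R u + \<rho>1 *\<^sub>R v) = B (p + \<rho>2 *\<^sub>R u + \<sigma>2 *\<^sub>R v)"
      using uv vu h(1) by (simp add: algebra_simps)
    then show ?thesis
      using near \<open>0 < \<sigma>1\<close> \<open>\<sigma>1 < h\<close> \<open>0 < \<rho>1\<close> \<open>\<rho>1 < h\<close>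
        \<open>0 < \<sigma>2\<close> \<open>\<sigma>2 < h\<close> \<open>0 < \<rho>2\<close> \<open>\<rho>2 < h\<close>
      by blast
  qed
  ultimately have "A p = B p"
    by (rule isCont_eq_if_values_meet)
  then show ?thesis unfolding A_def B_def .
qed

lemma Ck_compose_linear:
  assumes "Ck n g" and L: "bounded_linear L"
  shows "Ck n (\<lambda>x. g (L x))"
  using assms(1)
proof (induction n arbitrary: g)
  case 0
  then show ?case
    using linear_continuous_on[OF L] by (auto intro: continuous_on_compose2[of UNIV g UNIV L])
next
  case (Suc n)
  have dg: "\<forall>p. g differentiable (at p)" and cg: "\<forall>v. Ck n (\<lambda>p. frechet_derivative g (at p) v)"
    using Suc.prems by auto
  have chain: "((\<lambda>x. g (L x)) has_derivative (\<lambda>v. frechet_derivative g (at (L p)) (L v))) (at p)" for p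
    using has_derivative_compose[OF bounded_linear_imp_has_derivative[OF L]] dg frechet_derivative_works
    by blast
  have "(\<lambda>p. frechet_derivative (\<lambda>x. g (L x)) (at p) v) = (\<lambda>p. frechet_derivative g (at (L p)) (L v))" for v
    using chain frechet_derivative_at by (metis (no_types, lifting))
  moreover have "(\<lambda>x. g (L x)) differentiable (at p)" for p
    using chain differentiable_def by blast
  ultimately show ?case
    using Suc.IH[OF cg[rule_format]] by simp
qed

lemma smooth_compose_linear: "smooth g \<Longrightarrow> bounded_linear L \<Longrightarrow> smooth (\<lambda>x. g (L x))"
  unfolding smooth_def using Ck_compose_linear by blast

definition basis5 :: "nat \<Rightarrow> R5" where
  "basis5 k = (if k = 0 then (1,0,0,0,0) else if k = 1 then (0,1,0,0,0) else if k = 2 then (0,0,1,0,0)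
           else if k = 3 then (0,0,0,1,0) else (0,0,0,0,1))"

definition pdv :: "nat \<Rightarrow> (R5 \<Rightarrow> real) \<Rightarrow> R5 \<Rightarrow> real" where
  "pdv k g = (\<lambda>p. frechet_derivative g (at p) (basis5 k))"

fun pdvs :: "nat list \<Rightarrow> (R5 \<Rightarrow> real) \<Rightarrow> R5 \<Rightarrow> real" where
  "pdvs [] g = g"
| "pdvs (k # ks) g = pdv k (pdvs ks g)"

lemma smooth_pdv: "smooth g \<Longrightarrow> smooth (pdv k g)"
  unfolding pdv_def by (rule smooth_frechet_derivative)

lemma smooth_pdvs: "smooth g \<Longrightarrow> smooth (pdvs ks g)"
  by (induction ks) (auto intro: smooth_pdv)

lemma pdv_commute: "smooth g \<Longrightarrow> pdv k (pdv l g) = pdv l (pdv k g)"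
  unfolding pdv_def by (rule ext) (rule frechet_derivative_commute)

lemma pdv_pdvs: "smooth g \<Longrightarrow> pdv k (pdvs ks g) = pdvs (insort k ks) g"
proof (induction ks)
  case (Cons l ks)
  show ?case
  proof (cases "k \<le> l")
    case False
    have "pdv k (pdvs (l # ks) g) = pdv l (pdv k (pdvs ks g))"
      using pdv_commute[OF smooth_pdvs[OF Cons.prems]] by simp
    then show ?thesis using Cons False by simp
  qed simp
qed simp

lemma frechet_derivative_R5:
  assumes "smooth g"
  shows "frechet_derivative g (at p) (a,b,c,d,e) =
     a * pdv 0 g p + b * pdv 1 g p + c * pdv 2 g p + d * pdv 3 g p + e * pdv 4 g p"
proof -
  have lin: "linear (frechet_derivative g (at p))"
    by (rule linear_frechet_derivative_smooth[OF assms])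
  have "(a,b,c,d,e) = a *\<^sub>R basis5 0 + b *\<^sub>R basis5 1 + c *\<^sub>R basis5 2 + d *\<^sub>R basis5 3 + e *\<^sub>R basis5 4"
    by (simp add: basis5_def)
  then show ?thesis
    by (simp add: pdv_def linear_add[OF lin] linear_cmul[OF lin])
qed

lemma has_derivative_pdv:
  assumes "smooth g"
  shows "(g has_derivative (\<lambda>(a,b,c,d,e).
     a * pdv 0 g p + b * pdv 1 g p + c * pdv 2 g p + d * pdv 3 g p + e * pdv 4 g p)) (at p)"
  using smooth_has_derivative[OF assms, of p]
  by (rule has_derivative_eq_rhs) (auto simp: fun_eq_iff frechet_derivative_R5[OF assms])

lemma R5_ext:
  assumes "\<And>x y t u f. g (x,y,t,u,f) = h (x,y,t,u,f)"
  shows "g = h"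
proof
  fix p
  show "g p = h p" using assms by (cases p) simp
qed

lemma pdv_const: "pdv k (\<lambda>_. c) = (\<lambda>_. 0)"
  unfolding pdv_def by simp

lemma pdv_cmult: "smooth g \<Longrightarrow> pdv k (\<lambda>p. c * g p) = (\<lambda>p. c * pdv k g p)"
  unfolding pdv_def
  by (metis frechet_derivative_at has_derivative_mult_right smooth_has_derivative)

lemma pdv_uminus: "smooth g \<Longrightarrow> pdv k (\<lambda>p. - g p) = (\<lambda>p. - pdv k g p)"
  using pdv_cmult[of g k "-1"] by simp

lemma pdv_line:
  assumes g: "smooth g" and d: "\<And>p. pdv k g p = a"
  shows "g (p + s *\<^sub>R basis5 k) = g p + a * s"
proof -
  have "DERIV (\<lambda>s. g (p + s *\<^sub>R basis5 k) - a * s) s :> pdv k g (p + s *\<^sub>R basis5 k) - a * 1" for s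
    unfolding pdv_def by (intro DERIV_diff smooth_has_real_derivative_line[OF g] DERIV_cmult DERIV_ident)
  then have "\<forall>s. DERIV (\<lambda>s. g (p + s *\<^sub>R basis5 k) - a * s) s :> 0"
    using d by simp
  then have "g (p + s *\<^sub>R basis5 k) - a * s = g (p + 0 *\<^sub>R basis5 k) - a * 0"
    by (rule DERIV_isconst_all)
  then show ?thesis by simp
qed

definition affine5 :: "real \<Rightarrow> real \<Rightarrow> real \<Rightarrow> real \<Rightarrow> real \<Rightarrow> real \<Rightarrow> R5 \<Rightarrow> real" where
  "affine5 a0 a1 a2 a3 a4 b = (\<lambda>(x,y,t,u,f). a0 * x + a1 * y + a2 * t + a3 * u + a4 * f + b)"

lemma affine5_apply: "affine5 a0 a1 a2 a3 a4 b (x,y,t,u,f) = a0 * x + a1 * y + a2 * t + a3 * u + a4 * f + b"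
  by (simp add: affine5_def)

lemma has_derivative_affine5: "(affine5 a0 a1 a2 a3 a4 b has_derivative affine5 a0 a1 a2 a3 a4 0) (at p)"
  unfolding affine5_def case_prod_beta by (auto intro!: derivative_eq_intros)

lemma pdv_affine5: "pdv k (affine5 a0 a1 a2 a3 a4 b) =
   (\<lambda>_. if k = 0 then a0 else if k = 1 then a1 else if k = 2 then a2 else if k = 3 then a3 else a4)"
  unfolding pdv_def frechet_derivative_at[OF has_derivative_affine5, symmetric]
  by (auto simp: basis5_def affine5_def)

lemma affine5_if_pdv_const:
  assumes g: "smooth g" and "\<And>p. pdv 0 g p = a0" "\<And>p. pdv 1 g p = a1"
    and "\<And>p. pdv 2 g p = a2" "\<And>p. pdv 3 g p = a3" "\<And>p. pdv 4 g p = a4"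
  shows "g = affine5 a0 a1 a2 a3 a4 (g (0,0,0,0,0))"
proof -
  have "((\<lambda>p. g p - affine5 a0 a1 a2 a3 a4 0 p) has_derivative (\<lambda>_. 0)) (at p within UNIV)" for p
    using has_derivative_diff[OF has_derivative_pdv[OF g] has_derivative_affine5]
    by (rule has_derivative_eq_rhs) (auto simp: fun_eq_iff assms(2-6)[simplified] affine5_def)
  then obtain c where c: "\<And>p. g p - affine5 a0 a1 a2 a3 a4 0 p = c"
    using has_derivative_zero_constant[of UNIV "\<lambda>p. g p - affine5 a0 a1 a2 a3 a4 0 p"] by auto
  then have "c = g (0,0,0,0,0)"
    by (metis affine5_apply add_0 diff_0_right mult_zero_right)
  show ?thesis
  proof
    fix p :: R5
    show "g p = affine5 a0 a1 a2 a3 a4 (g (0,0,0,0,0)) p"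
      using c[of p] \<open>c = g (0,0,0,0,0)\<close> by (cases p) (simp add: affine5_def)
  qed
qed

lemma constant_if_pdv_zero:
  assumes "smooth g" and "\<And>k p. k < 5 \<Longrightarrow> pdv k g p = 0"
  shows "g = (\<lambda>_. g (0,0,0,0,0))"
proof -
  have "g = affine5 0 0 0 0 0 (g (0,0,0,0,0))"
    by (rule affine5_if_pdv_const) (simp_all add: assms)
  then show ?thesis
    by (simp add: fun_eq_iff affine5_def split_beta)
qed

definition proj3 :: "R5 \<Rightarrow> R3" where
  "proj3 = (\<lambda>(x,y,t,u,f). (x,y,t))"

definition emb3 :: "R3 \<Rightarrow> R5" where
  "emb3 = (\<lambda>(x,y,t). (x,y,t,0,0))"

definition pdv3 :: "nat \<Rightarrow> (R3 \<Rightarrow> real) \<Rightarrow> R3 \<Rightarrow> real" where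
  "pdv3 k G = (\<lambda>z. frechet_derivative G (at z) (ev k))"

definition u_affine :: "real \<Rightarrow> (R3 \<Rightarrow> real) \<Rightarrow> R5 \<Rightarrow> real" where
  "u_affine c G = (\<lambda>(x,y,t,u,f). c * u + G (x,y,t))"

lemma u_affine_apply: "u_affine c G (x,y,t,u,f) = c * u + G (x,y,t)"
  by (simp add: u_affine_def)

lemma bounded_linear_proj3: "bounded_linear proj3"
  unfolding proj3_def case_prod_beta
  by (intro bounded_linear_Pair bounded_linear_fst bounded_linear_compose[OF bounded_linear_fst]
      bounded_linear_compose[OF bounded_linear_snd] bounded_linear_snd)

lemma bounded_linear_emb3: "bounded_linear emb3"
proof -
  have "linear emb3" by (rule linearI) (auto simp: emb3_def)
  then show ?thesis by (simp add: linear_conv_bounded_linear)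
qed

lemma smooth_pdv3: "smooth G \<Longrightarrow> smooth (pdv3 k G)"
  unfolding pdv3_def by (rule smooth_frechet_derivative)

lemma pd_eq_pdv3: "smooth G \<Longrightarrow> pd k G = pdv3 k G"
  using smooth_has_real_derivative_line[of G _ "ev k" 0]
  by (auto simp: fun_eq_iff pd_def pdv3_def intro!: DERIV_imp_deriv)

lemma pdv3_commute: "smooth G \<Longrightarrow> pdv3 i (pdv3 j G) = pdv3 j (pdv3 i G)"
  unfolding pdv3_def by (rule ext) (rule frechet_derivative_commute)

lemma pdv3_commute_twice: "smooth F \<Longrightarrow> pdv3 i (pdv3 j (pdv3 j F)) = pdv3 j (pdv3 j (pdv3 i F))"
  using pdv3_commute[OF smooth_pdv3, of F j i j] pdv3_commute[of F i j] by simp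

lemma pdv_u_affine:
  assumes G: "smooth G"
  shows "pdv k (u_affine c G) =
    (if k = 3 then (\<lambda>_. c) else if k < 3 then u_affine 0 (pdv3 k G) else (\<lambda>_. 0))"
proof (rule ext)
  fix p
  have "u_affine c G = (\<lambda>p. c * fst (snd (snd (snd p))) + G (proj3 p))"
    by (auto simp: fun_eq_iff u_affine_def proj3_def)
  moreover have "((\<lambda>p. c * fst (snd (snd (snd p))) + G (proj3 p)) has_derivative
      (\<lambda>v. c * fst (snd (snd (snd v))) + frechet_derivative G (at (proj3 p)) (proj3 v))) (at p)"
    by (intro has_derivative_add has_derivative_mult_right has_derivative_fst has_derivative_snd
        has_derivative_ident has_derivative_compose[OF bounded_linear_imp_has_derivative[OF bounded_linear_proj3]]
        smooth_has_derivative[OF G])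
  ultimately have "pdv k (u_affine c G) p
      = c * fst (snd (snd (snd (basis5 k)))) + frechet_derivative G (at (proj3 p)) (proj3 (basis5 k))"
    unfolding pdv_def by (simp add: frechet_derivative_at[symmetric])
  moreover have "frechet_derivative G (at (proj3 p)) (0,0,0) = 0"
    using linear_0[OF linear_frechet_derivative_smooth[OF G]] by (simp add: zero_prod_def)
  ultimately show "pdv k (u_affine c G) p =
    (if k = 3 then (\<lambda>_. c) else if k < 3 then u_affine 0 (pdv3 k G) else (\<lambda>_. 0)) p"
    by (cases p) (auto simp: basis5_def proj3_def u_affine_def pdv3_def ev_def)
qed

lemma u_affine_if_pdv:
  assumes g: "smooth g" and f: "pdv 4 g = (\<lambda>_. 0)" and u: "\<And>k. k < 4 \<Longrightarrow> pdv k (pdv 3 g) = (\<lambda>_. 0)"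
  shows "g = u_affine (pdv 3 g (0,0,0,0,0)) (\<lambda>z. g (emb3 z))"
proof (rule R5_ext)
  fix x y t u f
  have "pdv 4 (pdv 3 g) = (\<lambda>_. 0)"
    using pdv_commute[OF g, of 4 3] f by (simp add: pdv_const)
  then have "pdv k (pdv 3 g) p = 0" if "k < 5" for k p
    using u that by (cases "k = 4") auto
  then have "pdv 3 g = (\<lambda>_. pdv 3 g (0,0,0,0,0))"
    using constant_if_pdv_zero[OF smooth_pdv[OF g]] by blast
  then have "g ((x,y,t,0,0) + u *\<^sub>R basis5 3) = g (x,y,t,0,0) + pdv 3 g (0,0,0,0,0) * u"
    by (intro pdv_line[OF g]) metis
  moreover have "g ((x,y,t,u,0) + f *\<^sub>R basis5 4) = g (x,y,t,u,0) + 0 * f"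
    using f by (intro pdv_line[OF g]) simp
  ultimately show "g (x,y,t,u,f) = u_affine (pdv 3 g (0,0,0,0,0)) (\<lambda>z. g (emb3 z)) (x,y,t,u,f)"
    by (simp add: basis5_def u_affine_def emb3_def)
qed

section \<open>Total derivatives of polynomial jet functions\<close>

text \<open>A jet term \<open>(r, (k, ks), m)\<close> stands for
  \<open>r * pdvs ks (B k) (basept z w) * \<Prod>(\<alpha>,a,b,c)\<in>m. w \<alpha> (mi a b c)\<close>. Lists of jet terms are
  closed under total derivatives, which makes the prolongation formula computable by simp.\<close>

type_synonym jmono = "(nat \<times> nat \<times> nat \<times> nat) list"
type_synonym jterm = "real \<times> (nat \<times> nat list) \<times> jmono"

fun mono_val :: "jmono \<Rightarrow> jet \<Rightarrow> real" where
  "mono_val [] w = 1"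
| "mono_val ((\<alpha>,a,b,c) # m) w = w \<alpha> (mi a b c) * mono_val m w"

definition shift_coord :: "nat \<Rightarrow> nat \<times> nat \<times> nat \<times> nat \<Rightarrow> nat \<times> nat \<times> nat \<times> nat" where
  "shift_coord i x = (case x of (\<alpha>,a,b,c) \<Rightarrow>
      if i = 0 then (\<alpha>, a + 1, b, c) else if i = 1 then (\<alpha>, a, b + 1, c) else (\<alpha>, a, b, c + 1))"

fun mono_totD :: "nat \<Rightarrow> jmono \<Rightarrow> jmono list" where
  "mono_totD i [] = []"
| "mono_totD i (x # m) = (shift_coord i x # m) # map (Cons x) (mono_totD i m)"

definition jterm_val :: "(nat \<Rightarrow> R5 \<Rightarrow> real) \<Rightarrow> jterm \<Rightarrow> jfun" where
  "jterm_val B t z w = (case t of (r,(k,ks),m) \<Rightarrow> r * pdvs ks (B k) (basept z w) * mono_val m w)"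

definition jterms_val :: "(nat \<Rightarrow> R5 \<Rightarrow> real) \<Rightarrow> jterm list \<Rightarrow> jfun" where
  "jterms_val B ts z w = sum_list (map (\<lambda>t. jterm_val B t z w) ts)"

text \<open>The first three summands are the chain rule through the coordinates \<open>x\<^sub>i\<close>, \<open>u\<close>, \<open>f\<close>
  of the base point; the remaining ones are the Leibniz rule on the monomial.\<close>

fun jterm_totD :: "nat \<Rightarrow> jterm \<Rightarrow> jterm list" where
  "jterm_totD i (r,(k,ks),m) =
     [(r,(k,insort i ks),m), (r,(k,insort 3 ks), shift_coord i (0,0,0,0) # m),
      (r,(k,insort 4 ks), shift_coord i (1,0,0,0) # m)] @ map (\<lambda>m'. (r,(k,ks),m')) (mono_totD i m)"

definition jterms_totD :: "nat \<Rightarrow> jterm list \<Rightarrow> jterm list" where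
  "jterms_totD i ts = concat (map (jterm_totD i) ts)"

lemma mi_apply: "mi a b c 0 = a" "mi a b c (Suc 0) = b" "mi a b c 1 = b" "mi a b c 2 = c"
  by (simp_all add: mi_def)

lemma addi_mi: "addi (mi a b c) 0 = mi (Suc a) b c" "addi (mi a b c) (Suc 0) = mi a (Suc b) c"
   "addi (mi a b c) 2 = mi a b (Suc c)"
  by (auto simp: addi_def mi_def fun_eq_iff)

lemma less_3_cases: "i < 3 \<Longrightarrow> i = 0 \<or> i = 1 \<or> i = (2::nat)"
  by auto

lemma mono_val_shift_coord: "i < 3 \<Longrightarrow> mono_val [shift_coord i (\<alpha>,a,b,c)] w = w \<alpha> (addi (mi a b c) i)"
  by (auto dest!: less_3_cases simp: shift_coord_def addi_mi)

lemma mono_val_Cons: "mono_val (x # m) w = mono_val [x] w * mono_val m w"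
  by (cases x) auto

lemma has_real_derivative_mono_val:
  assumes i: "i < 3"
  shows "((\<lambda>s. mono_val m (\<lambda>\<alpha> J. w \<alpha> J + s * w \<alpha> (addi J i))) has_real_derivative
           sum_list (map (\<lambda>m'. mono_val m' w) (mono_totD i m))) (at 0)"
proof (induction m)
  case (Cons x m)
  obtain \<alpha> a b c where x: "x = (\<alpha>,a,b,c)" by (cases x) auto
  have "((\<lambda>s. w \<alpha> (mi a b c) + s * w \<alpha> (addi (mi a b c) i)) has_real_derivative w \<alpha> (addi (mi a b c) i)) (at 0)"
    by (auto intro!: derivative_eq_intros)
  from DERIV_mult[OF this Cons.IH] show ?case
    using mono_val_shift_coord[OF i, of \<alpha> a b c w] mono_val_Cons[of "shift_coord i x" m w]
    by (simp add: x o_def sum_list_mult_const algebra_simps)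
qed simp

lemma basept_line:
  "i < 3 \<Longrightarrow> basept (z + s *\<^sub>R ev i) (\<lambda>\<alpha> J. w \<alpha> J + s * w \<alpha> (addi J i)) =
    basept z w + s *\<^sub>R (fst (ev i), fst (snd (ev i)), snd (snd (ev i)), w 0 (addi mi0 i), w 1 (addi mi0 i))"
  by (cases z) (simp add: basept_def algebra_simps)

lemma has_real_derivative_coeff:
  assumes i: "i < 3" and G: "smooth G"
  shows "((\<lambda>s. G (basept (z + s *\<^sub>R ev i) (\<lambda>\<alpha> J. w \<alpha> J + s * w \<alpha> (addi J i)))) has_real_derivative
     pdv i G (basept z w) + mono_val [shift_coord i (0,0,0,0)] w * pdv 3 G (basept z w)
        + mono_val [shift_coord i (1,0,0,0)] w * pdv 4 G (basept z w)) (at 0)"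
proof -
  define v where "v = (fst (ev i), fst (snd (ev i)), snd (snd (ev i)), w 0 (addi mi0 i), w 1 (addi mi0 i))"
  have "frechet_derivative G (at (basept z w)) v =
     pdv i G (basept z w) + mono_val [shift_coord i (0,0,0,0)] w * pdv 3 G (basept z w)
        + mono_val [shift_coord i (1,0,0,0)] w * pdv 4 G (basept z w)"
    using less_3_cases[OF i] mono_val_shift_coord[OF i, of _ 0 0 0 w]
    by (auto simp: v_def frechet_derivative_R5[OF G] ev_def mi0_def)
  then show ?thesis
    using smooth_has_real_derivative_line[OF G, of "basept z w" v 0]
    unfolding basept_line[OF i] v_def[symmetric] by simp
qed

lemma jterms_val_Nil [simp]: "jterms_val B [] z w = 0"
  by (simp add: jterms_val_def)

lemma jterms_val_Cons: "jterms_val B (t # ts) z w = jterm_val B t z w + jterms_val B ts z w"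
  by (simp add: jterms_val_def)

lemma jterms_val_append: "jterms_val B (ts @ ts') z w = jterms_val B ts z w + jterms_val B ts' z w"
  by (simp add: jterms_val_def)

lemma jterms_val_map_mono:
  "jterms_val B (map (\<lambda>m'. (r,(k,ks),m')) ms) z w
     = r * pdvs ks (B k) (basept z w) * sum_list (map (\<lambda>m'. mono_val m' w) ms)"
  by (induction ms) (auto simp: jterms_val_def jterm_val_def algebra_simps)

lemma has_real_derivative_jterm_val:
  assumes i: "i < 3" and B: "smooth (B k)"
  shows "((\<lambda>s. jterm_val B (r,(k,ks),m) (z + s *\<^sub>R ev i) (\<lambda>\<alpha> J. w \<alpha> J + s * w \<alpha> (addi J i)))
     has_real_derivative jterms_val B (jterm_totD i (r,(k,ks),m)) z w) (at 0)"
proof -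
  have G: "smooth (pdvs ks (B k))" by (rule smooth_pdvs[OF B])
  have "jterms_val B (jterm_totD i (r,(k,ks),m)) z w
      = r * (pdv i (pdvs ks (B k)) (basept z w)
             + mono_val [shift_coord i (0,0,0,0)] w * pdv 3 (pdvs ks (B k)) (basept z w)
             + mono_val [shift_coord i (1,0,0,0)] w * pdv 4 (pdvs ks (B k)) (basept z w)) * mono_val m w
        + r * pdvs ks (B k) (basept z w) * sum_list (map (\<lambda>m'. mono_val m' w) (mono_totD i m))"
    using mono_val_Cons[of "shift_coord i (0,0,0,0)" m w] mono_val_Cons[of "shift_coord i (1,0,0,0)" m w]
    by (simp add: jterms_val_append jterms_val_map_mono jterms_val_Cons jterm_val_def
        pdv_pdvs[OF B] algebra_simps)
  with DERIV_mult[OF DERIV_cmult[OF has_real_derivative_coeff[OF i G]] has_real_derivative_mono_val[OF i]]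
  show ?thesis
    by (simp add: jterm_val_def algebra_simps)
qed

definition smooth_family :: "(nat \<Rightarrow> R5 \<Rightarrow> real) \<Rightarrow> bool" where
  "smooth_family B = (\<forall>k. smooth (B k))"

lemma totD_jterms_val:
  assumes i: "i < 3" and B: "smooth_family B"
  shows "totD i (jterms_val B ts) = jterms_val B (jterms_totD i ts)"
proof -
  have "((\<lambda>s. jterms_val B ts (z + s *\<^sub>R ev i) (\<lambda>\<alpha> J. w \<alpha> J + s * w \<alpha> (addi J i))) has_real_derivative
     jterms_val B (jterms_totD i ts) z w) (at 0)" for z w
  proof (induction ts)
    case (Cons t ts)
    obtain r k ks m where t: "t = (r,(k,ks),m)" by (cases t) auto
    have "smooth (B k)" using B by (simp add: smooth_family_def)
    from DERIV_add[OF has_real_derivative_jterm_val[where B=B and k=k, OF i this, of r ks m z w] Cons.IH]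
    show ?case
      by (simp add: t jterms_val_Cons jterms_totD_def jterms_val_append add.assoc)
  qed (simp add: jterms_totD_def)
  then show ?thesis
    unfolding totD_def by (intro ext DERIV_imp_deriv)
qed

lemma totDJ_jterms_val:
  assumes "smooth_family B"
  shows "totDJ (mi a b c) (jterms_val B ts)
     = jterms_val B ((jterms_totD 0 ^^ a) ((jterms_totD 1 ^^ b) ((jterms_totD 2 ^^ c) ts)))"
proof -
  have "(totD i ^^ n) (jterms_val B ts) = jterms_val B ((jterms_totD i ^^ n) ts)" if "i < 3" for i n ts
    by (induction n) (simp_all add: totD_jterms_val[OF that assms])
  then show ?thesis
    unfolding totDJ_def mi_apply by simp
qed

definition vf_family :: "(nat \<Rightarrow> R5 \<Rightarrow> real) \<Rightarrow> (nat \<Rightarrow> R5 \<Rightarrow> real) \<Rightarrow> nat \<Rightarrow> R5 \<Rightarrow> real" where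
  "vf_family xi phi k = (if k < 3 then xi k else phi (k - 3))"

definition char_jterms :: "jterm list" where
  "char_jterms = [(1,(3,[]),[]), (-1,(0,[]),[(0,1,0,0)]), (-1,(1,[]),[(0,0,1,0)]), (-1,(2,[]),[(0,0,0,1)])]"

lemma sum_lessThan_3: "(\<Sum>i<3. g i) = g 0 + g 1 + (g (2::nat) :: real)"
  by (simp add: numeral_3_eq_3 lessThan_Suc numeral_2_eq_2)

lemma charQ_u_eq: "charQ xi phi 0 = jterms_val (vf_family xi phi) char_jterms"
  by (intro ext) (simp add: charQ_def char_jterms_def jterms_val_def jterm_val_def vf_family_def
      sum_lessThan_3 mi0_def addi_mi algebra_simps)

definition prol_jterms :: "nat \<Rightarrow> nat \<Rightarrow> nat \<Rightarrow> jterm list" where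
  "prol_jterms a b c = (jterms_totD 0 ^^ a) ((jterms_totD 1 ^^ b) ((jterms_totD 2 ^^ c) char_jterms)) @
     [(1,(0,[]),[(0,a+1,b,c)]), (1,(1,[]),[(0,a,b+1,c)]), (1,(2,[]),[(0,a,b,c+1)])]"

lemma prol_coeff_u_eq:
  assumes "smooth_family (vf_family xi phi)"
  shows "prol_coeff xi phi 0 (mi a b c) z w = jterms_val (vf_family xi phi) (prol_jterms a b c) z w"
  unfolding prol_coeff_def charQ_u_eq totDJ_jterms_val[OF assms] prol_jterms_def jterms_val_append
  by (simp add: jterms_val_Cons jterm_val_def vf_family_def sum_lessThan_3 addi_mi)

lemma prol_coeff_f_mi0: "prol_coeff xi phi 1 (mi 0 0 0) z w = phi 1 (basept z w)"
  by (simp add: prol_coeff_def totDJ_def mi_apply charQ_def mi0_def)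

lemma mi_order_mi: "mi_order (mi a b c) = a + b + c"
  by (simp add: mi_order_def mi_apply)

definition prolonged_eqn :: "real \<Rightarrow> real \<Rightarrow> (nat \<Rightarrow> R5 \<Rightarrow> real) \<Rightarrow> jfun" where
  "prolonged_eqn \<epsilon> \<gamma> B z w =
     jterms_val B (prol_jterms 0 0 2) z w
     - \<epsilon> * (jterms_val B (prol_jterms 2 0 1) z w + jterms_val B (prol_jterms 0 2 1) z w)
     - \<gamma> * (jterms_val B (prol_jterms 2 0 0) z w + jterms_val B (prol_jterms 0 2 0) z w)
     - B 4 (basept z w)"

lemma prolong_apply_eqn:
  assumes "smooth_family (vf_family xi phi)"
  shows "prolong_apply 3 xi phi (eqn \<epsilon> \<gamma>) z w = prolonged_eqn \<epsilon> \<gamma> (vf_family xi phi) z w"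
proof -
  define V where "V = (\<lambda>\<alpha> J. if \<alpha> < 2 \<and> mi_order J \<le> 3 then prol_coeff xi phi \<alpha> J z w else 0)"
  have "((\<lambda>s. eqn \<epsilon> \<gamma> (z + s *\<^sub>R xivec xi z w) (\<lambda>\<alpha> J. w \<alpha> J + s * V \<alpha> J)) has_real_derivative
     V 0 (mi 0 0 2) - \<epsilon> * (V 0 (mi 2 0 1) + V 0 (mi 0 2 1)) - \<gamma> * (V 0 (mi 2 0 0) + V 0 (mi 0 2 0))
     - V 1 (mi 0 0 0)) (at 0)"
    unfolding eqn_def mi0_def by (auto intro!: derivative_eq_intros)
  then have "prolong_apply 3 xi phi (eqn \<epsilon> \<gamma>) z w =
     V 0 (mi 0 0 2) - \<epsilon> * (V 0 (mi 2 0 1) + V 0 (mi 0 2 1)) - \<gamma> * (V 0 (mi 2 0 0) + V 0 (mi 0 2 0))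
     - V 1 (mi 0 0 0)"
    unfolding prolong_apply_def V_def by (rule DERIV_imp_deriv)
  also have "\<dots> = prolonged_eqn \<epsilon> \<gamma> (vf_family xi phi) z w"
    using prol_coeff_f_mi0[of xi phi z w]
    by (simp add: V_def prolonged_eqn_def mi_order_mi prol_coeff_u_eq[OF assms] vf_family_def)
  finally show ?thesis .
qed

definition eqn_invariant :: "real \<Rightarrow> real \<Rightarrow> (nat \<Rightarrow> R5 \<Rightarrow> real) \<Rightarrow> bool" where
  "eqn_invariant \<epsilon> \<gamma> B = (\<forall>z w. eqn \<epsilon> \<gamma> z w = 0 \<longrightarrow> prolonged_eqn \<epsilon> \<gamma> B z w = 0)"

lemma is_point_symmetry_iff_eqn_invariant:
  "smooth_family (vf_family xi phi) \<Longrightarrow>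
     is_point_symmetry 3 (eqn \<epsilon> \<gamma>) xi phi \<longleftrightarrow> eqn_invariant \<epsilon> \<gamma> (vf_family xi phi)"
  by (simp add: is_point_symmetry_def eqn_invariant_def prolong_apply_eqn)

section \<open>Determining equations\<close>

text \<open>A test jet lists its nonzero coordinates, \<open>(\<alpha>, a, b, c)\<close> standing for \<open>w \<alpha> (mi a b c)\<close>.
  Each determining equation is the coefficient of one coordinate \<open>s\<close> of a test jet on the
  solution set (\<open>u\<^sub>t\<^sub>t\<close> compensates the other coordinates); the invariance condition is affine
  in \<open>s\<close>, so the coefficient is its value at \<open>s = 1\<close> minus its value at \<open>s = 0\<close>.\<close>

fun lookup :: "('k \<times> real) list \<Rightarrow> 'k \<Rightarrow> real" where
  "lookup [] k = 0"
| "lookup ((k', v) # kvs) k = (if k = k' then v else lookup kvs k)"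

definition jet_of :: "((nat \<times> nat \<times> nat \<times> nat) \<times> real) list \<Rightarrow> jet" where
  "jet_of vs \<alpha> J = lookup vs (\<alpha>, J 0, J 1, J 2)"

lemma jet_of_mi: "jet_of vs \<alpha> (mi a b c) = lookup vs (\<alpha>, a, b, c)"
  by (simp add: jet_of_def mi_apply)

lemma basept_jet_of: "basept (x,y,t) (jet_of vs) = (x, y, t, jet_of vs 0 (mi 0 0 0), jet_of vs 1 (mi 0 0 0))"
  by (simp add: basept_def mi0_def)

lemma funpow_1_2: "g ^^ 1 = g" "g ^^ 2 = g \<circ> g"
  by (simp_all add: numeral_2_eq_2)

lemmas prolonged_eqn_unfold = prolonged_eqn_def prol_jterms_def char_jterms_def jterms_totD_def
  shift_coord_def funpow_1_2 jterms_val_def jterm_val_def basept_jet_of jet_of_mi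

lemma eqn_invariantD: "eqn_invariant \<epsilon> \<gamma> B \<Longrightarrow> eqn \<epsilon> \<gamma> z w = 0 \<Longrightarrow> prolonged_eqn \<epsilon> \<gamma> B z w = 0"
  unfolding eqn_invariant_def by blast

lemma eq_zero_by_difference: "(a1::real) = b1 \<Longrightarrow> a0 = b0 \<Longrightarrow> g = (a1 - b1) - (a0 - b0) \<Longrightarrow> g = 0"
  by simp

lemma det_eqs_f_tt:
  assumes H: "eqn_invariant \<epsilon> \<gamma> B" and k: "k < 4"
  shows "pdv 4 (B k) = (\<lambda>_. 0)"
proof (rule R5_ext)
  fix x y t u f
  have coeff: "pdv 4 (B 3) (x,y,t,u,f) - a * pdv 4 (B 0) (x,y,t,u,f) - b * pdv 4 (B 1) (x,y,t,u,f)
     - c * pdv 4 (B 2) (x,y,t,u,f) = 0" for a b c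
  proof -
    have h: "prolonged_eqn \<epsilon> \<gamma> B (x,y,t) (jet_of [((0,0,0,0),u), ((1,0,0,0),f), ((0,1,0,0),a),
        ((0,0,1,0),b), ((0,0,0,1),c), ((0,0,0,2),f), ((1,0,0,2),s)]) = 0" for s
      by (rule eqn_invariantD[OF H]) (simp add: eqn_def jet_of_mi mi0_def)
    note [simp] = prolonged_eqn_unfold
    note q = h[simplified]
    show ?thesis
      by (rule eq_zero_by_difference[OF q[where s=1, simplified] q[where s=0, simplified]])
        (simp add: algebra_simps)
  qed
  consider "k = 0" | "k = 1" | "k = 2" | "k = 3" using k by fastforce
  then show "pdv 4 (B k) (x,y,t,u,f) = 0"
    by cases (use coeff[of 0 0 0] coeff[of 1 0 0] coeff[of 0 1 0] coeff[of 0 0 1] in simp_all)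
qed

lemma det_eqs_u_xxx_u_yyy:
  assumes H: "eqn_invariant \<epsilon> \<gamma> B" and e: "\<epsilon> \<noteq> 0"
  shows "pdv 2 (B 0) (x,y,t,u,f) + r * pdv 3 (B 0) (x,y,t,u,f) = 0"
    and "pdv 2 (B 1) (x,y,t,u,f) + r * pdv 3 (B 1) (x,y,t,u,f) = 0"
proof -
  have h: "prolonged_eqn \<epsilon> \<gamma> B (x,y,t) (jet_of [((0,0,0,0),u), ((1,0,0,0),f), ((0,0,0,1),r),
      ((0,0,0,2),f), ((0,3,0,0),a), ((0,0,3,0),b)]) = 0" for a b
    by (rule eqn_invariantD[OF H]) (simp add: eqn_def jet_of_mi mi0_def)
  note [simp] = prolonged_eqn_unfold
  note q = h[simplified]
  have "\<epsilon> * (pdv 2 (B 0) (x,y,t,u,f) + r * pdv 3 (B 0) (x,y,t,u,f)) = 0"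
    by (rule eq_zero_by_difference[OF q[where a=1 and b=0, simplified] q[where a=0 and b=0, simplified]])
      (simp add: algebra_simps)
  then show "pdv 2 (B 0) (x,y,t,u,f) + r * pdv 3 (B 0) (x,y,t,u,f) = 0"
    using e by simp
  have "\<epsilon> * (pdv 2 (B 1) (x,y,t,u,f) + r * pdv 3 (B 1) (x,y,t,u,f)) = 0"
    by (rule eq_zero_by_difference[OF q[where a=0 and b=1, simplified] q[where a=0 and b=0, simplified]])
      (simp add: algebra_simps)
  then show "pdv 2 (B 1) (x,y,t,u,f) + r * pdv 3 (B 1) (x,y,t,u,f) = 0"
    using e by simp
qed

lemma det_eqs_u_xtt_u_ytt_u_xyt:
  assumes H: "eqn_invariant \<epsilon> \<gamma> B" and e: "\<epsilon> \<noteq> 0"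
  shows "pdv 0 (B 2) (x,y,t,u,f) + q * pdv 3 (B 2) (x,y,t,u,f) = 0"
    and "pdv 1 (B 2) (x,y,t,u,f) = 0"
    and "pdv 1 (B 0) (x,y,t,u,f) + pdv 0 (B 1) (x,y,t,u,f) + q * pdv 3 (B 1) (x,y,t,u,f) = 0"
proof -
  have h: "prolonged_eqn \<epsilon> \<gamma> B (x,y,t) (jet_of [((0,0,0,0),u), ((1,0,0,0),f), ((0,1,0,0),q),
      ((0,0,0,2),f), ((0,1,0,2),a), ((0,0,1,2),b), ((0,1,1,1),c)]) = 0" for a b c
    by (rule eqn_invariantD[OF H]) (simp add: eqn_def jet_of_mi mi0_def)
  note [simp] = prolonged_eqn_unfold
  note q = h[simplified]
  have "2 * \<epsilon> * (pdv 0 (B 2) (x,y,t,u,f) + q * pdv 3 (B 2) (x,y,t,u,f)) = 0"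
    by (rule eq_zero_by_difference[OF q[where a=1 and b=0 and c=0, simplified]
          q[where a=0 and b=0 and c=0, simplified]])
      (simp add: algebra_simps)
  then show "pdv 0 (B 2) (x,y,t,u,f) + q * pdv 3 (B 2) (x,y,t,u,f) = 0"
    using e by simp
  have "2 * \<epsilon> * pdv 1 (B 2) (x,y,t,u,f) = 0"
    by (rule eq_zero_by_difference[OF q[where a=0 and b=1 and c=0, simplified]
          q[where a=0 and b=0 and c=0, simplified]])
      (simp add: algebra_simps)
  then show "pdv 1 (B 2) (x,y,t,u,f) = 0"
    using e by simp
  have "2 * \<epsilon> * (pdv 1 (B 0) (x,y,t,u,f) + pdv 0 (B 1) (x,y,t,u,f) + q * pdv 3 (B 1) (x,y,t,u,f)) = 0"
    by (rule eq_zero_by_difference[OF q[where a=0 and b=0 and c=1, simplified]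
          q[where a=0 and b=0 and c=0, simplified]])
      (simp add: algebra_simps)
  then show "pdv 1 (B 0) (x,y,t,u,f) + pdv 0 (B 1) (x,y,t,u,f) + q * pdv 3 (B 1) (x,y,t,u,f) = 0"
    using e by simp
qed

lemma det_eqs_u_xxt_u_yyt:
  assumes H: "eqn_invariant \<epsilon> \<gamma> B" and e: "\<epsilon> \<noteq> 0"
  shows "2 * pdv 0 (B 0) (x,y,t,u,f) + \<epsilon> * (pdv 0 (pdv 0 (B 2)) (x,y,t,u,f) + pdv 1 (pdv 1 (B 2)) (x,y,t,u,f))
      - pdv 2 (B 2) (x,y,t,u,f) = 0"
    and "2 * pdv 1 (B 1) (x,y,t,u,f) + \<epsilon> * (pdv 0 (pdv 0 (B 2)) (x,y,t,u,f) + pdv 1 (pdv 1 (B 2)) (x,y,t,u,f))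
      - pdv 2 (B 2) (x,y,t,u,f) = 0"
proof -
  have h: "prolonged_eqn \<epsilon> \<gamma> B (x,y,t) (jet_of [((0,0,0,0),u), ((1,0,0,0),f),
      ((0,0,0,2),f + \<epsilon> * (a + b)), ((0,2,0,1),a), ((0,0,2,1),b)]) = 0" for a b
    by (rule eqn_invariantD[OF H]) (simp add: eqn_def jet_of_mi mi0_def)
  note [simp] = prolonged_eqn_unfold
  note q = h[simplified]
  have "\<epsilon> * (2 * pdv 0 (B 0) (x,y,t,u,f) + \<epsilon> * (pdv 0 (pdv 0 (B 2)) (x,y,t,u,f) + pdv 1 (pdv 1 (B 2)) (x,y,t,u,f))
      - pdv 2 (B 2) (x,y,t,u,f)) = 0"
    by (rule eq_zero_by_difference[OF q[where a=1 and b=0, simplified] q[where a=0 and b=0, simplified]])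
      (simp add: algebra_simps)
  then show "2 * pdv 0 (B 0) (x,y,t,u,f) + \<epsilon> * (pdv 0 (pdv 0 (B 2)) (x,y,t,u,f) + pdv 1 (pdv 1 (B 2)) (x,y,t,u,f))
      - pdv 2 (B 2) (x,y,t,u,f) = 0"
    using e by simp
  have "\<epsilon> * (2 * pdv 1 (B 1) (x,y,t,u,f) + \<epsilon> * (pdv 0 (pdv 0 (B 2)) (x,y,t,u,f) + pdv 1 (pdv 1 (B 2)) (x,y,t,u,f))
      - pdv 2 (B 2) (x,y,t,u,f)) = 0"
    by (rule eq_zero_by_difference[OF q[where a=0 and b=1, simplified] q[where a=0 and b=0, simplified]])
      (simp add: algebra_simps)
  then show "2 * pdv 1 (B 1) (x,y,t,u,f) + \<epsilon> * (pdv 0 (pdv 0 (B 2)) (x,y,t,u,f) + pdv 1 (pdv 1 (B 2)) (x,y,t,u,f))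
      - pdv 2 (B 2) (x,y,t,u,f) = 0"
    using e by simp
qed

lemma eq_zero_by_odd_part:
  "(a1::real) = b1 \<Longrightarrow> am = bm \<Longrightarrow> 2 * g = (a1 - b1) - (am - bm) \<Longrightarrow> g = 0"
  by simp

lemma eq_zero_by_even_part:
  "(a1::real) = b1 \<Longrightarrow> am = bm \<Longrightarrow> a0 = b0 \<Longrightarrow> 2 * g = (a1 - b1) + (am - bm) - 2 * (a0 - b0) \<Longrightarrow> g = 0"
  by simp

context
  fixes B :: "nat \<Rightarrow> R5 \<Rightarrow> real" and K c a0 b0 c0 :: real
  assumes xi: "B 0 = affine5 K c 0 0 0 a0" "B 1 = affine5 (-c) K 0 0 0 b0" "B 2 = affine5 0 0 (2*K) 0 0 c0"
begin

lemma det_eqs_u_xt_u_yt_u_xx: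
  assumes H: "eqn_invariant \<epsilon> \<gamma> B"
  shows "-2 * \<epsilon> * pdv 0 (pdv 3 (B 3)) (x,y,t,u,f) = 0"
    and "-2 * \<epsilon> * pdv 1 (pdv 3 (B 3)) (x,y,t,u,f) = 0"
    and "-2 * K * \<gamma> - \<epsilon> * pdv 2 (pdv 3 (B 3)) (x,y,t,u,f) = 0"
proof -
  have h: "prolonged_eqn \<epsilon> \<gamma> B (x,y,t) (jet_of [((0,0,0,0),u), ((1,0,0,0),f),
      ((0,0,0,2),f + \<gamma> * c'), ((0,1,0,1),a), ((0,0,1,1),b), ((0,2,0,0),c')]) = 0" for a b c'
    by (rule eqn_invariantD[OF H]) (simp add: eqn_def jet_of_mi mi0_def)
  note [simp] = prolonged_eqn_unfold xi[simplified] pdv_affine5 pdv_const affine5_apply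
  note q = h[simplified]
  show "-2 * \<epsilon> * pdv 0 (pdv 3 (B 3)) (x,y,t,u,f) = 0"
    by (rule eq_zero_by_difference[OF q[where a=1 and b=0 and c'=0, simplified]
          q[where a=0 and b=0 and c'=0, simplified]])
      (simp add: algebra_simps)
  show "-2 * \<epsilon> * pdv 1 (pdv 3 (B 3)) (x,y,t,u,f) = 0"
    by (rule eq_zero_by_difference[OF q[where a=0 and b=1 and c'=0, simplified]
          q[where a=0 and b=0 and c'=0, simplified]])
      (simp add: algebra_simps)
  show "-2 * K * \<gamma> - \<epsilon> * pdv 2 (pdv 3 (B 3)) (x,y,t,u,f) = 0"
    by (rule eq_zero_by_difference[OF q[where a=0 and b=0 and c'=1, simplified]
          q[where a=0 and b=0 and c'=0, simplified]])
      (simp add: algebra_simps)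
qed

text \<open>On this test jet the invariance condition is quadratic in \<open>u\<^sub>t\<close>.\<close>

lemma det_eqs_u_t:
  assumes H: "eqn_invariant \<epsilon> \<gamma> B"
  shows "2 * pdv 2 (pdv 3 (B 3)) (x,y,t,u,f)
      - \<epsilon> * (pdv 0 (pdv 0 (pdv 3 (B 3))) (x,y,t,u,f) + pdv 1 (pdv 1 (pdv 3 (B 3))) (x,y,t,u,f)) = 0"
    and "pdv 3 (pdv 3 (B 3)) (x,y,t,u,f) = 0"
    and "B 4 (x,y,t,u,f) = pdv 2 (pdv 2 (B 3)) (x,y,t,u,f) + f * pdv 3 (B 3) (x,y,t,u,f) - 4 * K * f
      - \<epsilon> * (pdv 0 (pdv 0 (pdv 2 (B 3))) (x,y,t,u,f) + pdv 1 (pdv 1 (pdv 2 (B 3))) (x,y,t,u,f))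
      - \<gamma> * (pdv 0 (pdv 0 (B 3)) (x,y,t,u,f) + pdv 1 (pdv 1 (B 3)) (x,y,t,u,f))"
proof -
  have h: "prolonged_eqn \<epsilon> \<gamma> B (x,y,t) (jet_of [((0,0,0,0),u), ((1,0,0,0),f),
      ((0,0,0,1),r), ((0,0,0,2),f)]) = 0" for r
    by (rule eqn_invariantD[OF H]) (simp add: eqn_def jet_of_mi mi0_def)
  note [simp] = prolonged_eqn_unfold xi[simplified] pdv_affine5 pdv_const affine5_apply
  note q = h[simplified]
  show "2 * pdv 2 (pdv 3 (B 3)) (x,y,t,u,f)
      - \<epsilon> * (pdv 0 (pdv 0 (pdv 3 (B 3))) (x,y,t,u,f) + pdv 1 (pdv 1 (pdv 3 (B 3))) (x,y,t,u,f)) = 0"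
    by (rule eq_zero_by_odd_part[OF q[where r=1, simplified] q[where r="-1", simplified]])
      (simp add: algebra_simps)
  show "pdv 3 (pdv 3 (B 3)) (x,y,t,u,f) = 0"
    by (rule eq_zero_by_even_part[OF q[where r=1, simplified] q[where r="-1", simplified]
          q[where r=0, simplified]])
      (simp add: algebra_simps)
  have "pdv 2 (pdv 2 (B 3)) (x,y,t,u,f) + f * pdv 3 (B 3) (x,y,t,u,f) - 4 * K * f
      - \<epsilon> * (pdv 0 (pdv 0 (pdv 2 (B 3))) (x,y,t,u,f) + pdv 1 (pdv 1 (pdv 2 (B 3))) (x,y,t,u,f))
      - \<gamma> * (pdv 0 (pdv 0 (B 3)) (x,y,t,u,f) + pdv 1 (pdv 1 (B 3)) (x,y,t,u,f)) - B 4 (x,y,t,u,f) = 0"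
    using q[where r=0, simplified] by (simp add: algebra_simps)
  then show "B 4 (x,y,t,u,f) = pdv 2 (pdv 2 (B 3)) (x,y,t,u,f) + f * pdv 3 (B 3) (x,y,t,u,f) - 4 * K * f
      - \<epsilon> * (pdv 0 (pdv 0 (pdv 2 (B 3))) (x,y,t,u,f) + pdv 1 (pdv 1 (pdv 2 (B 3))) (x,y,t,u,f))
      - \<gamma> * (pdv 0 (pdv 0 (B 3)) (x,y,t,u,f) + pdv 1 (pdv 1 (B 3)) (x,y,t,u,f))"
    by simp
qed

end

lemma xi_affine_if_determining:
  assumes s: "smooth g0" "smooth g1" "smooth g2"
    and g0: "\<And>k. k \<in> {2,3,4} \<Longrightarrow> pdv k g0 = (\<lambda>_. 0)"
    and g1: "\<And>k. k \<in> {2,3,4} \<Longrightarrow> pdv k g1 = (\<lambda>_. 0)"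
    and g2: "\<And>k. k \<in> {0,1,3,4} \<Longrightarrow> pdv k g2 = (\<lambda>_. 0)"
    and rot: "\<And>p. pdv 1 g0 p + pdv 0 g1 p = 0"
    and dil0: "\<And>p. 2 * pdv 0 g0 p = pdv 2 g2 p"
    and dil1: "\<And>p. 2 * pdv 1 g1 p = pdv 2 g2 p"
  shows "\<exists>K c. g0 = affine5 K c 0 0 0 (g0 (0,0,0,0,0)) \<and> g1 = affine5 (-c) K 0 0 0 (g1 (0,0,0,0,0))
      \<and> g2 = affine5 0 0 (2*K) 0 0 (g2 (0,0,0,0,0))"
proof -
  have swap: "pdv k (pdv l g) p = pdv l (pdv k g) p" if "smooth g" for g k l p
    using pdv_commute[OF that] by metis
  have half: "pdv 0 g0 = (\<lambda>p. (1/2) * pdv 2 g2 p)"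
    by (rule ext) (simp add: dil0[symmetric])
  have "pdv k (pdv 0 g0) p = 0" if k: "k < 5" for k p
  proof -
    consider "k = 0 \<or> k = 1" | "k \<in> {2,3,4}" using k by fastforce
    then show ?thesis
    proof cases
      case 1
      have "pdv k (pdv 0 g0) p = pdv k (\<lambda>p. (1/2) * pdv 2 g2 p) p"
        by (simp add: half)
      also have "\<dots> = (1/2) * pdv 2 (pdv k g2) p"
        using swap[OF s(3), of k 2] pdv_cmult[OF smooth_pdv[OF s(3)], of k "1/2" 2] by simp
      also have "\<dots> = 0"
        using 1 g2 by (auto simp: pdv_const)
      finally show ?thesis .
    qed (use swap[OF s(1), of k 0] g0 in \<open>simp add: pdv_const\<close>)
  qed
  then obtain K where K: "pdv 0 g0 = (\<lambda>_. K)"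
    using constant_if_pdv_zero[OF smooth_pdv[OF s(1)]] by metis
  have K1: "pdv 1 g1 = (\<lambda>_. K)" and K2: "pdv 2 g2 = (\<lambda>_. 2 * K)"
    using dil1 dil0 K by (simp_all add: fun_eq_iff)
  have rot': "pdv 1 g0 = (\<lambda>p. - pdv 0 g1 p)"
    using rot by (simp add: fun_eq_iff eq_neg_iff_add_eq_0)
  have "pdv k (pdv 1 g0) p = 0" if k: "k < 5" for k p
  proof -
    consider "k = 0" | "k = 1" | "k \<in> {2,3,4}" using k by fastforce
    then show ?thesis
    proof cases
      case 1
      then show ?thesis using swap[OF s(1), of 0 1] K by (simp add: pdv_const)
    next
      case 2
      then show ?thesis
        using swap[OF s(2), of 1 0] K1 by (simp add: rot'[simplified] pdv_uminus smooth_pdv s(2) pdv_const)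
    qed (use swap[OF s(1), of k 1] g0 in \<open>simp add: pdv_const\<close>)
  qed
  then obtain c where c: "pdv 1 g0 = (\<lambda>_. c)"
    using constant_if_pdv_zero[OF smooth_pdv[OF s(1)]] by metis
  have c1: "pdv 0 g1 = (\<lambda>_. - c)"
  proof
    fix p show "pdv 0 g1 p = - c"
      using rot[of p] fun_cong[OF c, of p] by simp
  qed
  have "g0 = affine5 K c 0 0 0 (g0 (0,0,0,0,0))"
    by (rule affine5_if_pdv_const[OF s(1)]) (simp_all add: K c[simplified] g0)
  moreover have "g1 = affine5 (-c) K 0 0 0 (g1 (0,0,0,0,0))"
    by (rule affine5_if_pdv_const[OF s(2)]) (simp_all add: K1[simplified] c1 g1)
  moreover have "g2 = affine5 0 0 (2*K) 0 0 (g2 (0,0,0,0,0))"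
    by (rule affine5_if_pdv_const[OF s(3)]) (simp_all add: K2 g2)
  ultimately show ?thesis by blast
qed

lemma eqn_invariant_imp_xi_affine:
  assumes B: "smooth_family B" and H: "eqn_invariant \<epsilon> \<gamma> B" and e: "\<epsilon> \<noteq> 0"
  shows "\<exists>K c. B 0 = affine5 K c 0 0 0 (B 0 (0,0,0,0,0)) \<and> B 1 = affine5 (-c) K 0 0 0 (B 1 (0,0,0,0,0))
      \<and> B 2 = affine5 0 0 (2*K) 0 0 (B 2 (0,0,0,0,0))"
proof -
  note tu = det_eqs_u_xxx_u_yyy[OF H e] and xy = det_eqs_u_xtt_u_ytt_u_xyt[OF H e] and xt = det_eqs_u_xxt_u_yyt[OF H e]
  have t: "pdv 2 (B 0) = (\<lambda>_. 0)" "pdv 2 (B 1) = (\<lambda>_. 0)"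
    using tu[where r=0] by (auto intro: R5_ext)
  have u: "pdv 3 (B 0) = (\<lambda>_. 0)" "pdv 3 (B 1) = (\<lambda>_. 0)"
    using tu[where r=1] t by (auto intro: R5_ext)
  have x: "pdv 0 (B 2) = (\<lambda>_. 0)" and y: "pdv 1 (B 2) = (\<lambda>_. 0)"
    using xy(1)[where q=0] xy(2) by (auto intro: R5_ext)
  have u2: "pdv 3 (B 2) = (\<lambda>_. 0)"
    using xy(1)[where q=1] x by (auto intro: R5_ext)
  have f: "pdv 4 (B 0) = (\<lambda>_. 0)" "pdv 4 (B 1) = (\<lambda>_. 0)" "pdv 4 (B 2) = (\<lambda>_. 0)"
    using det_eqs_f_tt[OF H] by simp_all
  show ?thesis
  proof (rule xi_affine_if_determining)
    show "smooth (B 0)" "smooth (B 1)" "smooth (B 2)"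
      using B by (simp_all add: smooth_family_def)
    show "pdv k (B 0) = (\<lambda>_. 0)" "pdv k (B 1) = (\<lambda>_. 0)" if "k \<in> {2,3,4}" for k
      using that t u f by fastforce+
    show "pdv k (B 2) = (\<lambda>_. 0)" if "k \<in> {0,1,3,4}" for k
      using that x y u2 f by fastforce
    show "pdv 1 (B 0) p + pdv 0 (B 1) p = 0" for p
      using xy(3)[where q=0] by (cases p) simp
    show "2 * pdv 0 (B 0) p = pdv 2 (B 2) p" for p
      using xt(1) x y by (cases p) (simp add: pdv_const)
    show "2 * pdv 1 (B 1) p = pdv 2 (B 2) p" for p
      using xt(2) x y by (cases p) (simp add: pdv_const)
  qed
qed

section \<open>The symmetry algebra\<close>

definition symmetry_form :: "real \<Rightarrow> real \<Rightarrow> (nat \<Rightarrow> R5 \<Rightarrow> real) \<Rightarrow> bool" where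
  "symmetry_form \<epsilon> \<gamma> B \<longleftrightarrow> (\<exists>c1 c2 c3 c4 c5 :: real. \<exists>F :: R3 \<Rightarrow> real. smooth F \<and>
     (\<forall>x y t u f.
        B 0 (x,y,t,u,f) = c1 * y + c2 \<and>
        B 1 (x,y,t,u,f) = - c1 * x + c3 \<and>
        B 2 (x,y,t,u,f) = c4 \<and>
        B 3 (x,y,t,u,f) = c5 * u + F (x,y,t) \<and>
        B 4 (x,y,t,u,f) = c5 * f + pd 2 (pd 2 F) (x,y,t)
           - \<epsilon> * (pd 2 (pd 0 (pd 0 F)) (x,y,t) + pd 2 (pd 1 (pd 1 F)) (x,y,t))
           - \<gamma> * (pd 0 (pd 0 F) (x,y,t) + pd 1 (pd 1 F) (x,y,t))))"

lemma eqn_invariant_imp_symmetry_form: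
  assumes e: "\<epsilon> \<noteq> 0" and g: "\<gamma> \<noteq> 0" and B: "smooth_family B" and H: "eqn_invariant \<epsilon> \<gamma> B"
  shows "symmetry_form \<epsilon> \<gamma> B"
proof -
  have B3: "smooth (B 3)" using B by (simp add: smooth_family_def)
  obtain K c where xi: "B 0 = affine5 K c 0 0 0 (B 0 (0,0,0,0,0))" "B 1 = affine5 (-c) K 0 0 0 (B 1 (0,0,0,0,0))"
      "B 2 = affine5 0 0 (2*K) 0 0 (B 2 (0,0,0,0,0))"
    using eqn_invariant_imp_xi_affine[OF B H e] by blast
  note uxy = det_eqs_u_xt_u_yt_u_xx[OF xi H] and ut = det_eqs_u_t[OF xi H]
  have x: "pdv 0 (pdv 3 (B 3)) = (\<lambda>_. 0)" and y: "pdv 1 (pdv 3 (B 3)) = (\<lambda>_. 0)"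
    using uxy(1,2) e by (auto intro: R5_ext)
  have t: "pdv 2 (pdv 3 (B 3)) = (\<lambda>_. 0)"
    using ut(1) x y by (auto intro: R5_ext simp: pdv_const)
  have u: "pdv 3 (pdv 3 (B 3)) = (\<lambda>_. 0)"
    using ut(2) by (auto intro: R5_ext)
  \<comment> \<open>the only use of \<open>\<gamma> \<noteq> 0\<close>: it excludes the scaling\<close>
  have K: "K = 0"
    using uxy(3)[of 0 0 0 0 0] t e g by simp
  define F where "F = (\<lambda>z. B 3 (emb3 z))"
  define c5 where "c5 = pdv 3 (B 3) (0,0,0,0,0)"
  have F: "smooth F"
    unfolding F_def by (rule smooth_compose_linear[OF B3 bounded_linear_emb3])
  have phi1: "B 3 = u_affine c5 F"
    unfolding F_def c5_def
  proof (rule u_affine_if_pdv[OF B3])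
    show "pdv 4 (B 3) = (\<lambda>_. 0)" using det_eqs_f_tt[OF H] by simp
    show "pdv k (pdv 3 (B 3)) = (\<lambda>_. 0)" if "k < 4" for k
    proof -
      have "k = 0 \<or> k = 1 \<or> k = 2 \<or> k = 3" using that by auto
      then show ?thesis using x y t u by auto
    qed
  qed
  have phi2: "B 4 (x,y,t,u,f) = c5 * f + pd 2 (pd 2 F) (x,y,t)
      - \<epsilon> * (pd 2 (pd 0 (pd 0 F)) (x,y,t) + pd 2 (pd 1 (pd 1 F)) (x,y,t))
      - \<gamma> * (pd 0 (pd 0 F) (x,y,t) + pd 1 (pd 1 F) (x,y,t))" for x y t u f
    using ut(3)[of x y t u f] unfolding phi1 K
    by (simp add: pdv_u_affine F smooth_pdv3 u_affine_apply pd_eq_pdv3 pdv3_commute_twice algebra_simps)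
  have coeffs: "B 0 (x,y,t,u,f) = c * y + B 0 (0,0,0,0,0)" "B 1 (x,y,t,u,f) = - c * x + B 1 (0,0,0,0,0)"
    "B 2 (x,y,t,u,f) = B 2 (0,0,0,0,0)" "B 3 (x,y,t,u,f) = c5 * u + F (x,y,t)" for x y t u f
    using xi[THEN fun_cong, of "(x,y,t,u,f)"] by (simp_all add: K affine5_apply phi1 u_affine_apply)
  show ?thesis
    unfolding symmetry_form_def
    by (rule exI[of _ c], rule exI[of _ "B 0 (0,0,0,0,0)"], rule exI[of _ "B 1 (0,0,0,0,0)"],
        rule exI[of _ "B 2 (0,0,0,0,0)"], rule exI[of _ c5], rule exI[of _ F])
      (intro conjI allI F coeffs phi2)
qed

lemma prolonged_eqn_symmetry:
  assumes F: "smooth F"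
    and B: "B 0 = affine5 0 c1 0 0 0 c2" "B 1 = affine5 (-c1) 0 0 0 0 c3" "B 2 = affine5 0 0 0 0 0 c4"
      "B 3 = u_affine c5 F"
      "B 4 = (\<lambda>(x,y,t,u,f). c5 * f + pdv3 2 (pdv3 2 F) (x,y,t)
          - \<epsilon> * (pdv3 0 (pdv3 0 (pdv3 2 F)) (x,y,t) + pdv3 1 (pdv3 1 (pdv3 2 F)) (x,y,t))
          - \<gamma> * (pdv3 0 (pdv3 0 F) (x,y,t) + pdv3 1 (pdv3 1 F) (x,y,t)))"
  shows "prolonged_eqn \<epsilon> \<gamma> B (x,y,t) w = c5 * eqn \<epsilon> \<gamma> (x,y,t) w"
  by (simp add: prolonged_eqn_unfold B pdv_affine5 pdv_const pdv_u_affine F smooth_pdv3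
      affine5_apply u_affine_apply basept_def eqn_def mi0_def algebra_simps del: One_nat_def)

lemma symmetry_form_imp_eqn_invariant:
  assumes "symmetry_form \<epsilon> \<gamma> B"
  shows "eqn_invariant \<epsilon> \<gamma> B"
proof -
  obtain c1 c2 c3 c4 c5 F where F: "smooth F" and coeffs: "\<forall>x y t u f.
      B 0 (x,y,t,u,f) = c1 * y + c2 \<and> B 1 (x,y,t,u,f) = - c1 * x + c3 \<and> B 2 (x,y,t,u,f) = c4 \<and>
      B 3 (x,y,t,u,f) = c5 * u + F (x,y,t) \<and>
      B 4 (x,y,t,u,f) = c5 * f + pd 2 (pd 2 F) (x,y,t)
        - \<epsilon> * (pd 2 (pd 0 (pd 0 F)) (x,y,t) + pd 2 (pd 1 (pd 1 F)) (x,y,t))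
        - \<gamma> * (pd 0 (pd 0 F) (x,y,t) + pd 1 (pd 1 F) (x,y,t))"
    using assms unfolding symmetry_form_def by blast
  have "B 0 = affine5 0 c1 0 0 0 c2" "B 1 = affine5 (-c1) 0 0 0 0 c3" "B 2 = affine5 0 0 0 0 0 c4"
      "B 3 = u_affine c5 F"
    by (rule R5_ext, simp add: coeffs[simplified] affine5_apply u_affine_apply)+
  moreover have "B 4 = (\<lambda>(x,y,t,u,f). c5 * f + pdv3 2 (pdv3 2 F) (x,y,t)
          - \<epsilon> * (pdv3 0 (pdv3 0 (pdv3 2 F)) (x,y,t) + pdv3 1 (pdv3 1 (pdv3 2 F)) (x,y,t))
          - \<gamma> * (pdv3 0 (pdv3 0 F) (x,y,t) + pdv3 1 (pdv3 1 F) (x,y,t)))"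
    by (rule R5_ext) (simp add: coeffs pd_eq_pdv3 F smooth_pdv3 pdv3_commute_twice)
  ultimately have "prolonged_eqn \<epsilon> \<gamma> B (x,y,t) w = c5 * eqn \<epsilon> \<gamma> (x,y,t) w" for x y t w
    by (rule prolonged_eqn_symmetry[OF F])
  then show ?thesis
    unfolding eqn_invariant_def by (metis prod_cases3 mult_zero_right)
qed

lemma eqn_invariant_iff_symmetry_form:
  "\<epsilon> \<noteq> 0 \<Longrightarrow> \<gamma> \<noteq> 0 \<Longrightarrow> smooth_family B \<Longrightarrow> eqn_invariant \<epsilon> \<gamma> B \<longleftrightarrow> symmetry_form \<epsilon> \<gamma> B"
  using eqn_invariant_imp_symmetry_form symmetry_form_imp_eqn_invariant by blast

theorem mainTheorem1:
  fixes \<epsilon> \<gamma> :: real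
    and xi1 xi2 xi3 phi1 phi2 :: "R5 \<Rightarrow> real"
  assumes "\<epsilon> \<noteq> 0" and "\<gamma> \<noteq> 0"
    and "smooth xi1" and "smooth xi2" and "smooth xi3" and "smooth phi1" and "smooth phi2"
  shows "is_point_symmetry 3 (eqn \<epsilon> \<gamma>) (vf xi1 xi2 xi3) (vf phi1 phi2 phi2)
     \<longleftrightarrow> (\<exists>c1 c2 c3 c4 c5 :: real. \<exists>F :: R3 \<Rightarrow> real. smooth F \<and>
          (\<forall>x y t u f.
             xi1 (x,y,t,u,f) = c1 * y + c2 \<and>
             xi2 (x,y,t,u,f) = - c1 * x + c3 \<and>
             xi3 (x,y,t,u,f) = c4 \<and>
             phi1 (x,y,t,u,f) = c5 * u + F (x,y,t) \<and>
             phi2 (x,y,t,u,f) = c5 * f + pd 2 (pd 2 F) (x,y,t)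
                - \<epsilon> * (pd 2 (pd 0 (pd 0 F)) (x,y,t) + pd 2 (pd 1 (pd 1 F)) (x,y,t))
                - \<gamma> * (pd 0 (pd 0 F) (x,y,t) + pd 1 (pd 1 F) (x,y,t))))"
proof -
  let ?B = "vf_family (vf xi1 xi2 xi3) (vf phi1 phi2 phi2)"
  have B: "smooth_family ?B"
    using assms(3-7) by (simp add: smooth_family_def vf_family_def vf_def)
  have "is_point_symmetry 3 (eqn \<epsilon> \<gamma>) (vf xi1 xi2 xi3) (vf phi1 phi2 phi2) \<longleftrightarrow> eqn_invariant \<epsilon> \<gamma> ?B"
    by (rule is_point_symmetry_iff_eqn_invariant[OF B])
  also have "\<dots> \<longleftrightarrow> symmetry_form \<epsilon> \<gamma> ?B"
    by (rule eqn_invariant_iff_symmetry_form[OF assms(1,2) B])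
  finally show ?thesis
    by (simp add: symmetry_form_def vf_family_def vf_def)
qed

end
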